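(* Let $\mathcal{H}$ be a finite-dimensional Hilbert space, $\{\rho_\theta;\theta\in\Theta\subset\mathbb{R}^d\}$ a smooth family of density operators, $\theta_0\in\Theta$ with $\rho=\rho_{\theta_0}$ strictly positive, and suppose the SLD tangent space at $\theta_0$ has a $\mathcal{D}_\rho$ invariant extension. Then for every $d\times d$ real positive matrix $G$ and every $\beta\in[0,1]$, $$C^{(H)}_{\theta_0,G}\ \ge\ C^{(\beta)}_{\theta_0,G}.$$
   Context: $\partial_i\rho=\frac{\partial}{\partial\theta^i}\rho_\theta|_{\theta=\theta_0}$. SLDs $L_i^{(S)}$: Hermitian with $\partial_i\rho=\frac12(\rho L_i^{(S)}+L_i^{(S)}\rho)$, assumed linearly independent; SLD tangent space $\mathcal{T}=\operatorname{span}_{\mathbb{R}}\{L_i^{(S)}\}$. Commutation operator: $\mathcal{D}_\rho(X)\rho+\rho\mathcal{D}_\rho(X)=\sqrt{-1}(X\rho-\rho X)$; a $\mathcal{D}_\rho$ invariant extension of $\mathcal{T}$ is a real subspace of Hermitian operators containing $\mathcal{T}$ and mapped into itself by $\mathcal{D}_\rho$. For $\beta\in[0,1]$, $L_i^{(\beta)}$ is defined by $\partial_i\rho=\frac{1+\beta}{2}\rho L_i^{(\beta)}+\frac{1-\beta}{2}L_i^{(\beta)}\rho$, $J^{(\beta)}_{\theta_0}=[\operatorname{Tr}\partial_i\rho\,L_j^{(\beta)}]_{ij}$, and $C^{(\beta)}_{\theta_0,G}=\operatorname{Tr}G(J^{(\beta)}_{\theta_0})^{-1}+\operatorname{Tr}|\sqrt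 G\,\operatorname{Im}(J^{(\beta)}_{\theta_0})^{-1}\sqrt G|$. Holevo bound: $C^{(H)}_{\theta_0,G}=\min_B\{\operatorname{Tr}GZ(B)+\operatorname{Tr}|\sqrt G\operatorname{Im}Z(B)\sqrt G|\}$ over Hermitian $B_1,\dots,B_d$ with $\operatorname{Tr}\partial_i\rho\,B_j=\delta_{ij}$, $Z_{ij}(B)=\operatorname{Tr}\rho B_jB_i$. Im entrywise; $|X|=(X^*X)^{1/2}$. *)

theory Defs
  imports "HOL-Analysis.Analysis"
begin

definition cadj :: "complex^'n^'n \<Rightarrow> complex^'n^'n" where
  "cadj A = (\<chi> i j. cnj (A $ j $ i))"

definition hermitian :: "complex^'n^'n \<Rightarrow> bool" where
  "hermitian A \<longleftrightarrow> cadj A = A"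

definition cinner :: "complex^'n \<Rightarrow> complex^'n \<Rightarrow> complex" where
  "cinner x y = (\<Sum>k\<in>UNIV. cnj (x $ k) * y $ k)"

definition cpsd :: "complex^'n^'n \<Rightarrow> bool" where
  "cpsd A \<longleftrightarrow> hermitian A \<and> (\<forall>x. 0 \<le> Re (cinner x (A *v x)))"

definition cpd :: "complex^'n^'n \<Rightarrow> bool" where
  "cpd A \<longleftrightarrow> hermitian A \<and> (\<forall>x. x \<noteq> 0 \<longrightarrow> 0 < Re (cinner x (A *v x)))"

definition density :: "complex^'n^'n \<Rightarrow> bool" where
  "density A \<longleftrightarrow> cpsd A \<and> trace A = 1"

definition csmul :: "complex \<Rightarrow> complex^'n^'n \<Rightarrow> complex^'n^'n" where
  "csmul c A = (\<chi> i j. c * A $ i $ j)"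

definition rpsd :: "real^'d^'d \<Rightarrow> bool" where
  "rpsd A \<longleftrightarrow> transpose A = A \<and> (\<forall>x. 0 \<le> x \<bullet> (A *v x))"

definition rpd :: "real^'d^'d \<Rightarrow> bool" where
  "rpd A \<longleftrightarrow> transpose A = A \<and> (\<forall>x. x \<noteq> 0 \<longrightarrow> 0 < x \<bullet> (A *v x))"

definition msqrt :: "real^'d^'d \<Rightarrow> real^'d^'d" where
  "msqrt A = (THE S. rpsd S \<and> S ** S = A)"

definition mabs :: "real^'d^'d \<Rightarrow> real^'d^'d" where
  "mabs X = msqrt (transpose X ** X)"

definition cmat :: "real^'d^'d \<Rightarrow> complex^'d^'d" where
  "cmat G = (\<chi> i j. complex_of_real (G $ i $ j))"

definition Im_mat :: "complex^'d^'d \<Rightarrow> real^'d^'d" where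
  "Im_mat A = (\<chi> i j. Im (A $ i $ j))"

definition pderiv_rho :: "(real^'d \<Rightarrow> complex^'n^'n) \<Rightarrow> 'd \<Rightarrow> complex^'n^'n" where
  "pderiv_rho Drho i = Drho (axis i 1)"

text \<open>beta-logarithmic derivative:
  d_i rho = (1+beta)/2 rho L + (1-beta)/2 L rho.  beta = 0 gives the SLD.\<close>
definition Lbeta :: "real \<Rightarrow> complex^'n^'n \<Rightarrow> complex^'n^'n \<Rightarrow> complex^'n^'n" where
  "Lbeta \<beta> rho D = (THE L. D = ((1 + \<beta>) / 2) *\<^sub>R (rho ** L) + ((1 - \<beta>) / 2) *\<^sub>R (L ** rho))"

definition SLD :: "complex^'n^'n \<Rightarrow> complex^'n^'n \<Rightarrow> complex^'n^'n" where
  "SLD rho D = (THE L. hermitian L \<and> D = (1/2) *\<^sub>R (rho ** L + L ** rho))"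

text \<open>Commutation operator: D(X) rho + rho D(X) = i (X rho - rho X).\<close>
definition commop :: "complex^'n^'n \<Rightarrow> complex^'n^'n \<Rightarrow> complex^'n^'n" where
  "commop rho X = (THE Y. Y ** rho + rho ** Y = csmul \<i> (X ** rho - rho ** X))"

definition SLD_tangent :: "complex^'n^'n \<Rightarrow> ('d \<Rightarrow> complex^'n^'n) \<Rightarrow> (complex^'n^'n) set" where
  "SLD_tangent rho dR = span (range (\<lambda>i. SLD rho (dR i)))"

definition has_invariant_extension :: "complex^'n^'n \<Rightarrow> ('d \<Rightarrow> complex^'n^'n) \<Rightarrow> bool" where
  "has_invariant_extension rho dR \<longleftrightarrow>
     (\<exists>V. subspace V \<and> (\<forall>X\<in>V. hermitian X) \<and> SLD_tangent rho dR \<subseteq> V \<and>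
          (\<forall>X\<in>V. commop rho X \<in> V))"

definition Jbeta :: "real \<Rightarrow> complex^'n^'n \<Rightarrow> ('d \<Rightarrow> complex^'n^'n) \<Rightarrow> complex^'d^'d" where
  "Jbeta \<beta> rho dR = (\<chi> i j. trace (dR i ** Lbeta \<beta> rho (dR j)))"

definition Cbeta :: "real \<Rightarrow> complex^'n^'n \<Rightarrow> ('d \<Rightarrow> complex^'n^'n) \<Rightarrow> real^'d^'d \<Rightarrow> real" where
  "Cbeta \<beta> rho dR G =
     (let Ji = matrix_inv (Jbeta \<beta> rho dR) in
      Re (trace (cmat G ** Ji)) + trace (mabs (msqrt G ** Im_mat Ji ** msqrt G)))"

definition Zmat :: "complex^'n^'n \<Rightarrow> ('d \<Rightarrow> complex^'n^'n) \<Rightarrow> complex^'d^'d" where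
  "Zmat rho B = (\<chi> i j. trace (rho ** B j ** B i))"

definition locally_unbiased :: "('d \<Rightarrow> complex^'n^'n) \<Rightarrow> ('d \<Rightarrow> complex^'n^'n) \<Rightarrow> bool" where
  "locally_unbiased dR B \<longleftrightarrow>
     (\<forall>j. hermitian (B j)) \<and> (\<forall>i j. trace (dR i ** B j) = (if i = j then 1 else 0))"

text \<open>Holevo bound (the minimum is attained; we write it as an infimum).\<close>
definition Holevo :: "complex^'n^'n \<Rightarrow> ('d \<Rightarrow> complex^'n^'n) \<Rightarrow> real^'d^'d \<Rightarrow> real" where
  "Holevo rho dR G = (INF B\<in>{B. locally_unbiased dR B}.
      Re (trace (cmat G ** Zmat rho B)) + trace (mabs (msqrt G ** Im_mat (Zmat rho B) ** msqrt G)))"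

end

(* The weighted inner product
     <X, Y> = (1 + beta)/2 tr(rho Y (adj X)) + (1 - beta)/2 tr(rho (adj X) Y)
   is positive definite for strictly positive rho, and the beta-logarithmic derivatives represent
   the derivatives in it: <X, L_i> = tr(d_i rho (adj X)).  Hence the Gram matrix of the L_i is J^(beta),
   for a locally unbiased B the mixed Gram matrices of B and L are the identity, and the Gram matrix
   of B is Re Z(B) + i beta Im Z(B).  Positivity of |sum x_i B_i - sum y_j L_j|^2 with y = J^-1 x
   gives the Cramer-Rao type inequality J^-1 <= Re Z(B) + i beta Im Z(B).  Sandwiching with sqrt G
   and using two properties of the absolute value of a real antisymmetric matrix A, namely
   beta iA <= |A| and tr |A| <= tr R whenever iA <= R, bounds C^(beta) by the Holevo objective of
   every locally unbiased B. *)

theory Submission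
  imports Defs
begin

lemma matrix_add_rdistrib: "(A + B) ** (C::'a::semiring_1^'p^'n) = A ** C + B ** C"
  by (simp add: matrix_matrix_mult_def vec_eq_iff sum.distrib algebra_simps)

lemma matrix_diff_ldistrib: "(C::'a::ring_1^'n^'m) ** (A - B) = C ** A - C ** B"
  by (simp add: matrix_matrix_mult_def vec_eq_iff sum_subtractf algebra_simps)

lemma matrix_diff_rdistrib: "(A - B) ** (C::'a::ring_1^'p^'n) = A ** C - B ** C"
  by (simp add: matrix_matrix_mult_def vec_eq_iff sum_subtractf algebra_simps)

lemma matrix_neg_mult: "(- A) ** (B::'a::ring_1^'p^'n) = - (A ** B)"
  by (simp add: matrix_matrix_mult_def vec_eq_iff sum_negf)

lemma matrix_mult_neg: "(A::'a::ring_1^'n^'m) ** (- B) = - (A ** B)"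
  by (simp add: matrix_matrix_mult_def vec_eq_iff sum_negf)

lemma matrix_mult_sum_right: "(A::'a::semiring_1^'n^'m) ** (\<Sum>b\<in>S. f b) = (\<Sum>b\<in>S. A ** f b)"
  by (induct S rule: infinite_finite_induct) (simp_all add: matrix_add_ldistrib)

lemma matrix_mult_sum_left: "(\<Sum>b\<in>S. f b) ** (A::'a::semiring_1^'p^'n) = (\<Sum>b\<in>S. f b ** A)"
  by (induct S rule: infinite_finite_induct) (simp_all add: matrix_add_rdistrib)

lemma matrix_vector_mult_smul: "(A::'a::comm_semiring_1^'n^'m) *v (c *s x) = c *s (A *v x)"
  by (simp add: vec_eq_iff matrix_vector_mult_def sum_distrib_left algebra_simps)

lemma matrix_vector_mult_sum: "(A::'a::semiring_1^'n^'m) *v (\<Sum>b\<in>S. f b) = (\<Sum>b\<in>S. A *v f b)"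
  by (induct S rule: infinite_finite_induct) (simp_all add: matrix_vector_right_distrib)

lemma sum_matrix_vector_mult: "(\<Sum>b\<in>S. f b :: 'a::semiring_1^'n^'m) *v x = (\<Sum>b\<in>S. f b *v x)"
  by (induct S rule: infinite_finite_induct) (simp_all add: matrix_vector_mult_add_rdistrib)

lemma matrix_vector_mult_scaleR_right: "(A::'a::real_algebra_1^'n^'m) *v (r *\<^sub>R x) = r *\<^sub>R (A *v x)"
  by (rule linear_cmul[OF matrix_vector_mul_linear])

lemma scaleR_matrix_vector_mult: "(r *\<^sub>R (A::'a::real_algebra_1^'n^'m)) *v x = r *\<^sub>R (A *v x)"
  by (simp add: vec_eq_iff matrix_vector_mult_def scaleR_sum_right)

lemma trace_zero: "trace (0::'a::semiring_1^'n^'n) = 0"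
  by (simp add: trace_def)

lemma trace_sum: "trace (\<Sum>b\<in>S. f b :: 'a::comm_semiring_1^'n^'n) = (\<Sum>b\<in>S. trace (f b))"
  by (induct S rule: infinite_finite_induct) (simp_all add: trace_add trace_zero)

lemma trace_mult_cycle: "trace (A ** B ** (C::'a::comm_semiring_1^'n^'n)) = trace (B ** C ** A)"
  by (metis matrix_mul_assoc trace_mul_sym)

lemma trace_sandwich: "g ** g = G \<Longrightarrow> trace (g ** X ** g) = trace (G ** (X::'a::comm_semiring_1^'d^'d))"
  by (metis matrix_mul_assoc trace_mul_sym)

lemma cinner_add_right: "cinner x (y + z) = cinner x y + cinner x z"
  by (simp add: cinner_def sum.distrib algebra_simps)

lemma cinner_add_left: "cinner (x + y) z = cinner x z + cinner y z"
  by (simp add: cinner_def sum.distrib algebra_simps)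

lemma cinner_diff_right: "cinner x (y - z) = cinner x y - cinner x z"
  by (simp add: cinner_def sum_subtractf algebra_simps)

lemma cinner_diff_left: "cinner (x - y) z = cinner x z - cinner y z"
  by (simp add: cinner_def sum_subtractf algebra_simps)

lemma cinner_smul_right: "cinner x (c *s y) = c * cinner x y"
  by (simp add: cinner_def sum_distrib_left algebra_simps)

lemma cinner_smul_left: "cinner (c *s x) y = cnj c * cinner x y"
  by (simp add: cinner_def sum_distrib_left algebra_simps)

lemma cinner_scaleR_right: "cinner x (r *\<^sub>R y) = of_real r * cinner x y"
  unfolding cinner_def vector_scaleR_component by (simp add: scaleR_conv_of_real sum_distrib_left algebra_simps)

lemma cinner_scaleR_left: "cinner (r *\<^sub>R x) y = of_real r * cinner x y"
  unfolding cinner_def vector_scaleR_component by (simp add: scaleR_conv_of_real sum_distrib_left algebra_simps)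

lemma cinner_zero_right [simp]: "cinner x 0 = 0"
  by (simp add: cinner_def)

lemma cinner_sum_right: "cinner x (\<Sum>i\<in>A. f i) = (\<Sum>i\<in>A. cinner x (f i))"
  by (induct A rule: infinite_finite_induct) (auto simp: cinner_add_right)

lemma cinner_commute: "cinner y x = cnj (cinner x y)"
  by (simp add: cinner_def mult.commute)

lemma Re_cinner: "Re (cinner x y) = x \<bullet> y"
  by (simp add: cinner_def inner_vec_def inner_complex_def Re_sum)

lemma cinner_self: "cinner x x = of_real ((norm x)\<^sup>2)"
proof -
  have "cinner x x = (\<Sum>k\<in>UNIV. of_real ((cmod (x$k))\<^sup>2))"
    unfolding cinner_def by (intro sum.cong refl) (subst complex_norm_square, rule mult.commute)
  also have "\<dots> = of_real ((norm x)\<^sup>2)"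
    by (simp only: of_real_sum[symmetric]) (simp add: norm_vec_def L2_set_def sum_nonneg)
  finally show ?thesis .
qed

lemma cinner_self_eq_0: "cinner x x = 0 \<longleftrightarrow> x = 0"
  by (simp add: cinner_self)

lemma cadj_cadj [simp]: "cadj (cadj A) = A"
  by (simp add: cadj_def vec_eq_iff)

lemma cinner_cadj_left: "cinner (A *v x) y = cinner x (cadj A *v y)"
  unfolding cinner_def cadj_def matrix_vector_mult_def
  by (simp add: sum_distrib_left sum_distrib_right algebra_simps) (rule sum.swap)

lemma hermitian_cinner_swap: "hermitian H \<Longrightarrow> cinner x (H *v y) = cinner (H *v x) y"
  by (simp add: cinner_cadj_left hermitian_def)

lemma hermitian_cinner_real:
  assumes "hermitian H"
  shows "cinner x (H *v x) = of_real (Re (cinner x (H *v x)))"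
proof -
  have "cinner x (H *v x) = cnj (cinner x (H *v x))"
    using hermitian_cinner_swap[OF assms, of x x] cinner_commute[of "H *v x" x] by simp
  thus ?thesis by (metis Reals_cnj_iff complex_is_Real_iff of_real_Re)
qed

lemma cadj_mult: "cadj (A ** B) = cadj B ** cadj A"
  by (simp add: cadj_def matrix_matrix_mult_def vec_eq_iff mult.commute)

lemma cadj_add: "cadj (A + B) = cadj A + cadj B"
  by (simp add: cadj_def vec_eq_iff)

lemma cadj_scaleR: "cadj (r *\<^sub>R A) = r *\<^sub>R cadj A"
  by (simp add: cadj_def vec_eq_iff)

lemma cadj_zero [simp]: "cadj 0 = 0"
  by (simp add: cadj_def vec_eq_iff)

lemma cadj_sum: "cadj (\<Sum>b\<in>B. f b) = (\<Sum>b\<in>B. cadj (f b))"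
  by (induct B rule: infinite_finite_induct) (auto simp: cadj_add)

lemma cadj_mat_1 [simp]: "cadj (mat 1) = mat 1"
  by (simp add: cadj_def mat_def vec_eq_iff)

lemma trace_cadj: "trace (cadj A) = cnj (trace A)"
  by (simp add: trace_def cadj_def)

lemma hermitian_trace_mult_real:
  assumes "hermitian X" "hermitian Y"
  shows "trace (X ** Y) = of_real (Re (trace (X ** Y)))"
proof -
  have "cnj (trace (X ** Y)) = trace (Y ** X)"
    using assms by (simp add: trace_cadj[symmetric] cadj_mult hermitian_def)
  also have "\<dots> = trace (X ** Y)"
    by (rule trace_mul_sym)
  finally show ?thesis by (metis Reals_cnj_iff complex_is_Real_iff of_real_Re)
qed

lemma scaleR_csmul: "r *\<^sub>R (c *s (x::complex^'n)) = (of_real r * c) *s x"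
  unfolding vec_eq_iff vector_scaleR_component vector_smult_component by (simp add: scaleR_conv_of_real)

lemma cadj_csmul: "cadj (csmul c A) = csmul (cnj c) (cadj A)"
  by (simp add: csmul_def cadj_def vec_eq_iff)

lemma csmul_mult: "csmul a X ** csmul b Y = csmul (a * b) (X ** Y)"
  by (simp add: csmul_def matrix_matrix_mult_def vec_eq_iff sum_distrib_left algebra_simps)

lemma csmul_matrix_mult: "csmul c A ** B = csmul c (A ** B)"
  by (simp add: csmul_def matrix_matrix_mult_def vec_eq_iff sum_distrib_left mult.assoc)

lemma matrix_mult_csmul: "A ** csmul c B = csmul c (A ** B)"
  by (simp add: csmul_def matrix_matrix_mult_def vec_eq_iff sum_distrib_left algebra_simps)

lemma csmul_scaleR: "csmul c (r *\<^sub>R A) = r *\<^sub>R csmul c A"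
  by (simp add: csmul_def vec_eq_iff scaleR_conv_of_real)

lemma csmul_minus_one: "csmul (-1) M = - M"
  by (simp add: csmul_def vec_eq_iff)

lemma trace_csmul: "trace (csmul c M) = c * trace M"
  by (simp add: trace_def csmul_def sum_distrib_left)

lemma trace_scaleR: "trace (r *\<^sub>R (A::complex^'n^'n)) = of_real r * trace A"
  unfolding trace_def vector_scaleR_component by (simp add: sum_distrib_left scaleR_conv_of_real)

section \<open>Spectral theorem for Hermitian matrices\<close>

lemma zero_if_linear_le_quadratic:
  fixes c K :: real
  assumes "\<forall>t. 2 * t * c \<le> t\<^sup>2 * K"
  shows "c = 0"
proof -
  define t where "t = c / (\<bar>K\<bar> + 1)"
  have ct: "c = t * (\<bar>K\<bar> + 1)"
    unfolding t_def by (simp add: add_nonneg_pos)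
  have "t\<^sup>2 * K \<le> t\<^sup>2 * \<bar>K\<bar>"
    by (simp add: mult_left_mono)
  moreover have "2 * t * c \<le> t\<^sup>2 * K"
    using assms by blast
  ultimately have "2 * t * c \<le> t * t * \<bar>K\<bar>"
    by (simp add: power2_eq_square)
  hence "(t * t) * (\<bar>K\<bar> + 2) \<le> 0"
    unfolding ct by (simp add: algebra_simps)
  moreover have "0 < \<bar>K\<bar> + 2"
    by (simp add: add_nonneg_pos)
  ultimately have "t * t \<le> 0"
    by (simp add: mult_le_0_iff)
  hence "t * t = 0"
    using zero_le_square[of t] by linarith
  thus ?thesis using ct by simp
qed

lemma hermitian_form_max_on_subspace:
  fixes H :: "complex^'n^'n"
  assumes sU: "subspace U" and z: "z \<in> U" "z \<noteq> 0"
  obtains x0 where "x0 \<in> U" "norm x0 = 1"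
    "\<forall>v\<in>U. Re (cinner v (H *v v)) \<le> Re (cinner x0 (H *v x0)) * (norm v)\<^sup>2"
proof -
  define S where "S = U \<inter> sphere 0 1"
  define f where "f x = Re (cinner x (H *v x))" for x
  have "compact S"
    unfolding S_def by (intro closed_Int_compact closed_subspace sU compact_sphere)
  moreover have "(1 / norm z) *\<^sub>R z \<in> S"
    unfolding S_def using z sU by (simp add: subspace_scale)
  moreover have "continuous_on S f"
    unfolding f_def Re_cinner by (intro continuous_on_inner continuous_on_id linear_continuous_on)
      (simp add: linear_linear)
  ultimately obtain x0 where x0S: "x0 \<in> S" and x0max: "\<forall>y\<in>S. f y \<le> f x0"
    using continuous_attains_sup[of S f] by blast
  have f_scale: "f (r *\<^sub>R v) = r\<^sup>2 * f v" for r v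
    unfolding f_def
    by (simp add: matrix_vector_mult_scaleR_right cinner_scaleR_left cinner_scaleR_right power2_eq_square)
  have "f v \<le> f x0 * (norm v)\<^sup>2" if "v \<in> U" for v
  proof (cases "v = 0")
    case True
    thus ?thesis by (simp add: f_def)
  next
    case False
    have "(1 / norm v) *\<^sub>R v \<in> S"
      unfolding S_def using that sU False by (simp add: subspace_scale)
    hence "f ((1 / norm v) *\<^sub>R v) \<le> f x0"
      using x0max by blast
    hence "f v / (norm v)\<^sup>2 \<le> f x0"
      by (simp add: f_scale power2_eq_square)
    thus ?thesis using False by (simp add: divide_le_eq mult.commute)
  qed
  thus thesis using that x0S unfolding S_def f_def by auto
qed

lemma hermitian_maximizer_orthogonal:
  fixes H :: "complex^'n^'n"
  assumes herm: "hermitian H" and sU: "subspace U" and x0U: "x0 \<in> U" and wU: "w \<in> U"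
    and cx0: "cinner x0 x0 = 1" and wo: "cinner x0 w = 0"
    and x0_max: "\<forall>v\<in>U. Re (cinner v (H *v v)) \<le> Re (cinner x0 (H *v x0)) * (norm v)\<^sup>2"
  shows "Re (cinner w (H *v x0)) = 0"
proof -
  define f where "f x = Re (cinner x (H *v x))" for x
  define c where "c = Re (cinner w (H *v x0))"
  \<comment> \<open>compare the form at \<open>x0 + t w\<close> with its maximum\<close>
  have "2 * t * c \<le> t\<^sup>2 * (f x0 * (norm w)\<^sup>2 - f w)" for t
  proof -
    define v where "v = x0 + t *\<^sub>R w"
    have "v \<in> U"
      unfolding v_def using sU x0U wU by (simp add: subspace_add subspace_scale)
    have "Re (cinner x0 (H *v w)) = c"
      using hermitian_cinner_swap[OF herm, of x0 w] cinner_commute[of "H *v x0" w]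
      by (simp add: c_def)
    hence fv: "f v = f x0 + 2 * t * c + t\<^sup>2 * f w"
      unfolding f_def v_def c_def
      by (simp add: matrix_vector_right_distrib matrix_vector_mult_scaleR_right cinner_add_left
          cinner_add_right cinner_scaleR_left cinner_scaleR_right power2_eq_square algebra_simps)
    have "cinner w x0 = 0"
      using wo cinner_commute[of w x0] by simp
    hence "Re (cinner v v) = 1 + t\<^sup>2 * (norm w)\<^sup>2"
      unfolding v_def
      by (simp add: cinner_add_left cinner_add_right cinner_scaleR_left cinner_scaleR_right
          cinner_self[of w] cx0 wo power2_eq_square)
    hence "(norm v)\<^sup>2 = 1 + t\<^sup>2 * (norm w)\<^sup>2"
      by (simp add: cinner_self)
    moreover have "f v \<le> f x0 * (norm v)\<^sup>2"
      using x0_max \<open>v \<in> U\<close> unfolding f_def by blast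
    ultimately show ?thesis
      unfolding fv by (simp add: algebra_simps)
  qed
  thus ?thesis
    using zero_if_linear_le_quadratic c_def by blast
qed

lemma subspace_csmul:
  assumes "subspace U" "\<forall>x\<in>U. \<i> *s x \<in> U" "x \<in> U"
  shows "c *s x \<in> U"
proof -
  have c: "c = of_real (Re c) + of_real (Im c) * \<i>"
    by (simp add: complex_eq_iff)
  have "c *s x = Re c *\<^sub>R x + Im c *\<^sub>R (\<i> *s x)"
    unfolding vec_eq_iff vector_scaleR_component vector_smult_component vector_add_component
    by (subst c) (simp add: scaleR_conv_of_real algebra_simps)
  thus ?thesis using assms by (simp add: subspace_add subspace_scale)
qed

lemma hermitian_maximizer_eigenvector:
  fixes H :: "complex^'n^'n"
  assumes herm: "hermitian H" and sU: "subspace U"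
    and iU: "\<forall>x\<in>U. \<i> *s x \<in> U" and HU: "\<forall>x\<in>U. H *v x \<in> U"
    and x0U: "x0 \<in> U" and cx0: "cinner x0 x0 = 1"
    and x0_max: "\<forall>v\<in>U. Re (cinner v (H *v v)) \<le> Re (cinner x0 (H *v x0)) * (norm v)\<^sup>2"
  shows "H *v x0 = of_real (Re (cinner x0 (H *v x0))) *s x0"
proof -
  define lam where "lam = Re (cinner x0 (H *v x0))"
  have orth: "cinner y (H *v x0) = 0" if y: "y \<in> U" "cinner x0 y = 0" for y
  proof -
    have "\<i> *s y \<in> U" "cinner x0 (\<i> *s y) = 0"
      using y iU by (auto simp: cinner_smul_right)
    hence "Re (cinner (\<i> *s y) (H *v x0)) = 0"
      by (rule hermitian_maximizer_orthogonal[OF herm sU x0U _ cx0 _ x0_max])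
    moreover have "Re (cinner y (H *v x0)) = 0"
      using y by (rule hermitian_maximizer_orthogonal[OF herm sU x0U _ cx0 _ x0_max])
    ultimately show ?thesis
      by (simp add: cinner_smul_left complex_eq_iff)
  qed
  have lam: "cinner x0 (H *v x0) = of_real lam"
    unfolding lam_def by (rule hermitian_cinner_real[OF herm])
  define w where "w = H *v x0 - of_real lam *s x0"
  have "w \<in> U"
    unfolding w_def using HU x0U sU iU by (intro subspace_diff subspace_csmul) auto
  moreover have wo: "cinner x0 w = 0"
    unfolding w_def by (simp add: cinner_diff_right cinner_smul_right cx0 lam)
  ultimately have "cinner w (H *v x0) = 0"
    by (rule orth)
  moreover have "cinner w w = cinner (H *v x0) w - of_real lam * cinner x0 w"
    by (subst (1) w_def) (simp add: cinner_diff_left cinner_smul_left)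
  ultimately have "cinner w w = 0"
    using wo cinner_commute[of w "H *v x0"] by simp
  hence "w = 0"
    by (simp add: cinner_self_eq_0)
  thus ?thesis
    unfolding w_def lam_def[symmetric] by simp
qed

definition corthonormal :: "(complex^'n) set \<Rightarrow> bool" where
  "corthonormal B \<longleftrightarrow>
     (\<forall>b\<in>B. cinner b b = 1) \<and> (\<forall>b\<in>B. \<forall>c\<in>B. b \<noteq> c \<longrightarrow> cinner b c = 0)"

definition ceigenbasis_on ::
    "(complex^'n) set \<Rightarrow> complex^'n^'n \<Rightarrow> (complex^'n) set \<Rightarrow> (complex^'n \<Rightarrow> real) \<Rightarrow> bool" where
  "ceigenbasis_on U H B ev \<longleftrightarrow> finite B \<and> B \<subseteq> U \<and> corthonormal B \<and>
     (\<forall>b\<in>B. H *v b = of_real (ev b) *s b) \<and> (\<forall>x\<in>U. (\<Sum>b\<in>B. cinner b x *s b) = x)"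

abbreviation ceigenbasis :: "complex^'n^'n \<Rightarrow> (complex^'n) set \<Rightarrow> (complex^'n \<Rightarrow> real) \<Rightarrow> bool" where
  "ceigenbasis \<equiv> ceigenbasis_on UNIV"

lemma ceigenbasis_on_insert:
  assumes B: "ceigenbasis_on {y\<in>U. cinner x0 y = 0} H B ev"
    and sU: "subspace U" and iU: "\<forall>x\<in>U. \<i> *s x \<in> U"
    and x0U: "x0 \<in> U" and cx0: "cinner x0 x0 = 1" and eig: "H *v x0 = of_real lam *s x0"
  shows "ceigenbasis_on U H (insert x0 B) (ev(x0 := lam))"
proof -
  have ob: "cinner x0 b = 0" "cinner b x0 = 0" if "b \<in> B" for b
    using B that cinner_commute[of b x0] unfolding ceigenbasis_on_def by auto
  have x0B: "x0 \<notin> B"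
    using ob cx0 by force
  have "(\<Sum>b\<in>insert x0 B. cinner b x *s b) = x" if xU: "x \<in> U" for x
  proof -
    define y where "y = x - cinner x0 x *s x0"
    have "y \<in> U"
      unfolding y_def using xU x0U sU iU by (intro subspace_diff subspace_csmul) auto
    moreover have "cinner x0 y = 0"
      unfolding y_def by (simp add: cinner_diff_right cinner_smul_right cx0)
    ultimately have "(\<Sum>b\<in>B. cinner b y *s b) = y"
      using B unfolding ceigenbasis_on_def by blast
    moreover have "(\<Sum>b\<in>B. cinner b y *s b) = (\<Sum>b\<in>B. cinner b x *s b)"
      using ob unfolding y_def by (simp add: cinner_diff_right cinner_smul_right)
    moreover have "finite B"
      using B unfolding ceigenbasis_on_def by blast
    ultimately show ?thesis
      using x0B unfolding y_def by simp
  qed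
  thus ?thesis
    using B x0U cx0 eig ob x0B unfolding ceigenbasis_on_def corthonormal_def by auto
qed

lemma hermitian_ceigenbasis_on:
  fixes H :: "complex^'n^'n"
  assumes herm: "hermitian H"
  shows "subspace U \<Longrightarrow> \<forall>x\<in>U. \<i> *s x \<in> U \<Longrightarrow> \<forall>x\<in>U. H *v x \<in> U \<Longrightarrow>
    \<exists>B ev. ceigenbasis_on U H B ev"
proof (induction "dim U" arbitrary: U rule: less_induct)
  case less
  note sU = less.prems(1) and iU = less.prems(2) and HU = less.prems(3)
  show ?case
  proof (cases "U \<subseteq> {0}")
    case True
    hence "ceigenbasis_on U H {} ev" for ev
      by (auto simp: ceigenbasis_on_def corthonormal_def)
    thus ?thesis by blast
  next
    case False
    then obtain z where "z \<in> U" "z \<noteq> 0" by blast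
    then obtain x0 where x0U: "x0 \<in> U" and "norm x0 = 1"
      and x0_max: "\<forall>v\<in>U. Re (cinner v (H *v v)) \<le> Re (cinner x0 (H *v x0)) * (norm v)\<^sup>2"
      using hermitian_form_max_on_subspace[OF sU] by metis
    hence cx0: "cinner x0 x0 = 1"
      by (simp add: cinner_self)
    define lam where "lam = Re (cinner x0 (H *v x0))"
    have eig: "H *v x0 = of_real lam *s x0"
      unfolding lam_def by (rule hermitian_maximizer_eigenvector[OF herm sU iU HU x0U cx0 x0_max])
    define U' where "U' = {y\<in>U. cinner x0 y = 0}"
    have sU': "subspace U'"
      unfolding U'_def using sU by (auto simp: subspace_def cinner_add_right cinner_scaleR_right)
    have iU': "\<forall>x\<in>U'. \<i> *s x \<in> U'"
      unfolding U'_def using iU by (auto simp: cinner_smul_right)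
    have HU': "\<forall>x\<in>U'. H *v x \<in> U'"
      unfolding U'_def using HU
      by (auto simp: hermitian_cinner_swap[OF herm] eig cinner_smul_left)
    have "U' \<subseteq> U" "x0 \<notin> U'"
      unfolding U'_def using cx0 by auto
    hence "span U' \<subset> span U"
      using x0U sU sU' span_eq_iff[of U'] span_eq_iff[of U] by blast
    hence "dim U' < dim U"
      by (rule dim_psubset)
    then obtain B ev where "ceigenbasis_on U' H B ev"
      using less.hyps[OF _ sU' iU' HU'] by blast
    thus ?thesis
      using ceigenbasis_on_insert[OF _ sU iU x0U cx0 eig] unfolding U'_def by blast
  qed
qed

theorem hermitian_ceigenbasis: "hermitian H \<Longrightarrow> \<exists>B ev. ceigenbasis H B ev"
  using hermitian_ceigenbasis_on[of H UNIV] by (simp add: subspace_UNIV)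

lemma corthonormal_coord:
  assumes "finite B" "corthonormal B" "b \<in> B"
  shows "cinner b (\<Sum>c\<in>B. f c *s c) = f b"
proof -
  have "cinner b (\<Sum>c\<in>B. f c *s c) = (\<Sum>c\<in>B. f c * cinner b c)"
    by (simp add: cinner_sum_right cinner_smul_right)
  also have "\<dots> = f b * cinner b b + (\<Sum>c\<in>B-{b}. f c * cinner b c)"
    using assms by (simp add: sum.remove)
  also have "(\<Sum>c\<in>B-{b}. f c * cinner b c) = 0"
    using assms unfolding corthonormal_def by (intro sum.neutral) auto
  finally show ?thesis
    using assms unfolding corthonormal_def by simp
qed

lemma ceigenbasis_expansion: "ceigenbasis H B ev \<Longrightarrow> (\<Sum>b\<in>B. cinner b x *s b) = x"
  unfolding ceigenbasis_on_def by blast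

lemma ceigenbasis_matrix_vector_mult:
  assumes "ceigenbasis H B ev"
  shows "M *v x = (\<Sum>b\<in>B. cinner b x *s (M *v b))"
proof -
  have "M *v x = M *v (\<Sum>b\<in>B. cinner b x *s b)"
    by (simp only: ceigenbasis_expansion[OF assms])
  thus ?thesis by (simp add: matrix_vector_mult_sum matrix_vector_mult_smul)
qed

lemma ceigenbasis_cinner_eigen:
  "ceigenbasis H B ev \<Longrightarrow> b \<in> B \<Longrightarrow> cinner b (H *v b) = of_real (ev b)"
  unfolding ceigenbasis_on_def corthonormal_def by (simp add: cinner_smul_right)

lemma cpsd_eigenvalue_nonneg: "cpsd P \<Longrightarrow> ceigenbasis P B ev \<Longrightarrow> b \<in> B \<Longrightarrow> 0 \<le> ev b"
  using ceigenbasis_cinner_eigen[of P B ev b] unfolding cpsd_def by (metis Re_complex_of_real)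

definition couter :: "complex^'n \<Rightarrow> complex^'n^'n" where
  "couter b = (\<chi> i j. b$i * cnj (b$j))"

definition spectral_sum :: "(complex^'n) set \<Rightarrow> (complex^'n \<Rightarrow> real) \<Rightarrow> complex^'n^'n" where
  "spectral_sum B g = (\<Sum>b\<in>B. g b *\<^sub>R couter b)"

lemma couter_mult_vector: "couter b *v x = cinner b x *s b"
  by (simp add: couter_def cinner_def vec_eq_iff matrix_vector_mult_def sum_distrib_left algebra_simps)

lemma cadj_couter: "cadj (couter b) = couter b"
  by (simp add: couter_def cadj_def vec_eq_iff)

lemma spectral_sum_mult_vector: "spectral_sum B g *v x = (\<Sum>b\<in>B. (of_real (g b) * cinner b x) *s b)"
  unfolding spectral_sum_def sum_matrix_vector_mult scaleR_matrix_vector_mult couter_mult_vector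
  by (intro sum.cong refl) (simp add: scaleR_csmul)

lemma hermitian_spectral_sum: "hermitian (spectral_sum B g)"
  by (simp add: hermitian_def spectral_sum_def cadj_sum cadj_scaleR cadj_couter)

lemma cinner_spectral_sum:
  "cinner x (spectral_sum B g *v x) = (\<Sum>b\<in>B. of_real (g b * (cmod (cinner b x))\<^sup>2))"
  unfolding spectral_sum_mult_vector cinner_sum_right cinner_smul_right
proof (intro sum.cong refl)
  fix b
  have "cinner x b * cinner b x = of_real ((cmod (cinner b x))\<^sup>2)"
    by (simp only: cinner_commute[of x b] complex_norm_square mult.commute)
  thus "of_real (g b) * cinner b x * cinner x b = of_real (g b * (cmod (cinner b x))\<^sup>2)"
    by (simp add: mult.commute mult.left_commute)
qed

lemma cpsd_spectral_sum: "\<forall>b\<in>B. 0 \<le> g b \<Longrightarrow> cpsd (spectral_sum B g)"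
  unfolding cpsd_def
  by (auto simp: hermitian_spectral_sum cinner_spectral_sum Re_sum intro!: sum_nonneg)

lemma ceigenbasis_eq_spectral_sum: "ceigenbasis H B ev \<Longrightarrow> H = spectral_sum B ev"
proof (subst matrix_eq, intro allI)
  fix x
  assume eB: "ceigenbasis H B ev"
  hence "H *v x = H *v (\<Sum>b\<in>B. cinner b x *s b)"
    by (simp only: ceigenbasis_expansion)
  also have "\<dots> = (\<Sum>b\<in>B. (of_real (ev b) * cinner b x) *s b)"
    using eB unfolding ceigenbasis_on_def matrix_vector_mult_sum matrix_vector_mult_smul
    by (intro sum.cong) (auto simp: mult.commute)
  finally show "H *v x = spectral_sum B ev *v x"
    by (simp add: spectral_sum_mult_vector)
qed

lemma spectral_sum_mult:
  assumes "finite B" "corthonormal B"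
  shows "spectral_sum B g ** spectral_sum B h = spectral_sum B (\<lambda>b. g b * h b)"
proof (subst matrix_eq, intro allI)
  fix x
  have "(spectral_sum B g ** spectral_sum B h) *v x = spectral_sum B g *v (spectral_sum B h *v x)"
    by (simp add: matrix_vector_mul_assoc)
  also have "\<dots> = (\<Sum>b\<in>B. (of_real (g b) * (of_real (h b) * cinner b x)) *s b)"
    unfolding spectral_sum_mult_vector[of B g]
    by (intro sum.cong refl) (simp add: corthonormal_coord[OF assms] spectral_sum_mult_vector)
  finally show "(spectral_sum B g ** spectral_sum B h) *v x = spectral_sum B (\<lambda>b. g b * h b) *v x"
    unfolding spectral_sum_mult_vector by (simp add: mult.assoc)
qed

lemma ceigenbasis_trace:
  assumes "ceigenbasis H B ev"
  shows "trace M = (\<Sum>b\<in>B. cinner b (M *v b))"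
proof -
  have "(\<Sum>b\<in>B. couter b) *v x = mat 1 *v x" for x
    by (simp add: sum_matrix_vector_mult couter_mult_vector ceigenbasis_expansion[OF assms])
  hence "(\<Sum>b\<in>B. couter b) = mat 1"
    using matrix_eq by blast
  hence "trace M = trace (\<Sum>b\<in>B. M ** couter b)"
    by (simp add: matrix_mult_sum_right[symmetric])
  also have "\<dots> = (\<Sum>b\<in>B. cinner b (M *v b))"
    unfolding trace_def matrix_matrix_mult_def couter_def cinner_def matrix_vector_mult_def
    by (simp add: sum_distrib_left algebra_simps) (rule sum.swap)
  finally show ?thesis .
qed

lemma trace_spectral_sum:
  assumes "ceigenbasis H B ev"
  shows "trace (spectral_sum B g) = of_real (sum g B)"
proof -
  have B: "finite B" "corthonormal B"
    using assms unfolding ceigenbasis_on_def by auto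
  have "cinner b (spectral_sum B g *v b) = of_real (g b)" if "b \<in> B" for b
    using that B(2) corthonormal_coord[OF B that, of "\<lambda>c. of_real (g c) * cinner c b"]
    unfolding spectral_sum_mult_vector corthonormal_def by simp
  thus ?thesis
    by (simp add: ceigenbasis_trace[OF assms])
qed

definition Re_mat :: "complex^'d^'d \<Rightarrow> real^'d^'d" where
  "Re_mat A = (\<chi> i j. Re (A $ i $ j))"

definition cconj :: "complex^'n^'n \<Rightarrow> complex^'n^'n" where
  "cconj A = (\<chi> i j. cnj (A $ i $ j))"

definition vconj :: "complex^'n \<Rightarrow> complex^'n" where
  "vconj x = (\<chi> i. cnj (x $ i))"

lemma cmat_mult: "cmat (A ** B) = cmat A ** cmat B"
  by (simp add: cmat_def matrix_matrix_mult_def vec_eq_iff)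

lemma cadj_cmat: "cadj (cmat A) = cmat (transpose A)"
  by (simp add: cmat_def cadj_def transpose_def vec_eq_iff)

lemma cmat_inject: "cmat A = cmat B \<longleftrightarrow> A = B"
  by (simp add: cmat_def vec_eq_iff)

lemma cmat_add: "cmat (A + B) = cmat A + cmat B"
  by (simp add: cmat_def vec_eq_iff)

lemma cmat_diff: "cmat (A - B) = cmat A - cmat B"
  by (simp add: cmat_def vec_eq_iff)

lemma cmat_uminus: "cmat (- A) = - cmat A"
  by (simp add: cmat_def vec_eq_iff)

lemma trace_cmat: "trace (cmat A) = of_real (trace A)"
  by (simp add: cmat_def trace_def)

lemma hermitian_cmat: "transpose g = g \<Longrightarrow> hermitian (cmat g)"
  by (simp add: hermitian_def cadj_cmat)

lemma cmat_Re_Im: "M = cmat (Re_mat M) + csmul \<i> (cmat (Im_mat M))"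
  by (simp add: cmat_def Re_mat_def Im_mat_def csmul_def vec_eq_iff complex_eq_iff)

lemma hermitian_Im_mat_antisym: "hermitian M \<Longrightarrow> transpose (Im_mat M) = - Im_mat M"
  unfolding hermitian_def cadj_def Im_mat_def transpose_def vec_eq_iff
  by (simp, metis cnj.sel(2) vec_lambda_beta)

lemma Re_trace_eq_trace_Re_mat: "Re (trace M) = trace (Re_mat M)"
  by (simp add: trace_def Re_mat_def Re_sum)

lemma Re_mat_cmat_mult: "Re_mat (cmat G ** M) = G ** Re_mat M"
  by (simp add: Re_mat_def cmat_def matrix_matrix_mult_def vec_eq_iff Re_sum)

lemma Im_mat_sandwich: "Im_mat (cmat g ** M ** cmat h) = g ** Im_mat M ** h"
  by (simp add: Im_mat_def cmat_def matrix_matrix_mult_def vec_eq_iff Im_sum sum_distrib_right)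

lemma cconj_mult: "cconj (A ** B) = cconj A ** cconj B"
  by (simp add: cconj_def matrix_matrix_mult_def vec_eq_iff)

lemma cconj_cmat: "cconj (cmat A) = cmat A"
  by (simp add: cconj_def cmat_def vec_eq_iff)

lemma cconj_fixed_imp_real: "cconj M = M \<Longrightarrow> M = cmat (Re_mat M)"
  unfolding cconj_def cmat_def Re_mat_def vec_eq_iff by (simp add: complex_eq_iff)

lemma cinner_cconj: "cinner x (cconj M *v x) = cnj (cinner (vconj x) (M *v vconj x))"
  by (simp add: cinner_def cconj_def vconj_def matrix_vector_mult_def)

lemma cadj_cconj: "cadj (cconj A) = cconj (cadj A)"
  by (simp add: cconj_def cadj_def vec_eq_iff)

lemma cpsd_cconj: "cpsd M \<Longrightarrow> cpsd (cconj M)"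
  unfolding cpsd_def hermitian_def by (simp add: cadj_cconj cinner_cconj)

lemma Re_cinner_cmat:
  "Re (cinner x (cmat S *v x)) =
     (\<chi> k. Re (x$k)) \<bullet> (S *v (\<chi> k. Re (x$k))) + (\<chi> k. Im (x$k)) \<bullet> (S *v (\<chi> k. Im (x$k)))"
  by (simp add: cinner_def cmat_def matrix_vector_mult_def inner_vec_def Re_sum sum_distrib_left
      algebra_simps sum.distrib[symmetric])

lemma cpsd_cmat_iff: "cpsd (cmat T) \<longleftrightarrow> rpsd T"
proof
  assume "rpsd T"
  thus "cpsd (cmat T)"
    unfolding rpsd_def cpsd_def hermitian_def by (simp add: cadj_cmat Re_cinner_cmat)
next
  assume T: "cpsd (cmat T)"
  have "transpose T = T"
    using T by (simp add: cpsd_def hermitian_def cadj_cmat cmat_inject)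
  moreover have "0 \<le> x \<bullet> (T *v x)" for x
  proof -
    have "Re (cinner (\<chi> k. of_real (x$k)) (cmat T *v (\<chi> k. of_real (x$k)))) = x \<bullet> (T *v x)"
      unfolding Re_cinner_cmat by (simp add: inner_vec_def matrix_vector_mult_def)
    thus ?thesis
      using T unfolding cpsd_def by metis
  qed
  ultimately show "rpsd T"
    unfolding rpsd_def by blast
qed

section \<open>Square roots and absolute values of matrices\<close>

lemma cpsd_square_eigenvector:
  assumes P: "cpsd P" and v: "(P ** P) *v v = of_real (p * p) *s v" and p: "0 \<le> p"
  shows "P *v v = of_real p *s v"
proof -
  obtain C q where eC: "ceigenbasis P C q"
    using hermitian_ceigenbasis P unfolding cpsd_def by blast
  have C: "finite C" "corthonormal C"
    using eC unfolding ceigenbasis_on_def by auto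
  have P_eq: "P = spectral_sum C q"
    by (rule ceigenbasis_eq_spectral_sum[OF eC])
  have "cinner c v = 0 \<or> q c = p" if c: "c \<in> C" for c
  proof -
    have "of_real (q c * q c) * cinner c v = cinner c ((P ** P) *v v)"
      unfolding P_eq spectral_sum_mult[OF C] spectral_sum_mult_vector corthonormal_coord[OF C c] ..
    also have "\<dots> = of_real (p * p) * cinner c v"
      unfolding v cinner_smul_right ..
    finally have "cinner c v = 0 \<or> q c * q c = p * p"
      by (metis mult_cancel_right of_real_eq_iff)
    moreover have "0 \<le> q c"
      by (rule cpsd_eigenvalue_nonneg[OF P eC c])
    ultimately show ?thesis
      using p by (metis power2_eq_imp_eq power2_eq_square)
  qed
  hence "P *v v = (\<Sum>c\<in>C. (of_real p * cinner c v) *s c)"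
    unfolding P_eq spectral_sum_mult_vector by (intro sum.cong refl) auto
  also have "\<dots> = of_real p *s (\<Sum>c\<in>C. cinner c v *s c)"
    by (simp add: sum_cmul[symmetric] vector_smult_assoc)
  also have "(\<Sum>c\<in>C. cinner c v *s c) = v"
    by (rule ceigenbasis_expansion[OF eC])
  finally show ?thesis .
qed

lemma cpsd_sqrt_unique:
  assumes P1: "cpsd P1" and P2: "cpsd P2" and sq: "P1 ** P1 = P2 ** P2"
  shows "P1 = P2"
proof -
  obtain B p where eB: "ceigenbasis P1 B p"
    using hermitian_ceigenbasis P1 unfolding cpsd_def by blast
  have P2b: "P2 *v b = P1 *v b" if b: "b \<in> B" for b
  proof -
    have P1b: "P1 *v b = of_real (p b) *s b"
      using eB b unfolding ceigenbasis_on_def by blast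
    have "(P2 ** P2) *v b = of_real (p b * p b) *s b"
      unfolding sq[symmetric] matrix_vector_mul_assoc[symmetric] P1b matrix_vector_mult_smul
      by (simp add: P1b)
    thus ?thesis
      using cpsd_square_eigenvector[OF P2 _ cpsd_eigenvalue_nonneg[OF P1 eB b]] P1b by simp
  qed
  show ?thesis
  proof (subst matrix_eq, intro allI)
    fix x
    show "P1 *v x = P2 *v x"
      unfolding ceigenbasis_matrix_vector_mult[OF eB, of P1 x]
        ceigenbasis_matrix_vector_mult[OF eB, of P2 x]
      using P2b by simp
  qed
qed

lemma rpsd_sqrt_unique: "rpsd T1 \<Longrightarrow> rpsd T2 \<Longrightarrow> T1 ** T1 = T2 ** T2 \<Longrightarrow> T1 = T2"
  by (metis cmat_inject cmat_mult cpsd_sqrt_unique cpsd_cmat_iff)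

lemma rpsd_sqrt_exists:
  assumes S: "rpsd S"
  shows "\<exists>T. rpsd T \<and> T ** T = S"
proof -
  have H: "cpsd (cmat S)"
    using S by (simp add: cpsd_cmat_iff)
  obtain B ev where eB: "ceigenbasis (cmat S) B ev"
    using hermitian_ceigenbasis H unfolding cpsd_def by blast
  have B: "finite B" "corthonormal B"
    using eB unfolding ceigenbasis_on_def by auto
  define N where "N = spectral_sum B (\<lambda>b. sqrt (ev b))"
  have N: "cpsd N"
    unfolding N_def using cpsd_eigenvalue_nonneg[OF H eB] by (intro cpsd_spectral_sum) simp
  have NN: "N ** N = cmat S"
  proof -
    have "N ** N = spectral_sum B (\<lambda>b. sqrt (ev b) * sqrt (ev b))"
      unfolding N_def by (rule spectral_sum_mult[OF B])
    also have "\<dots> = spectral_sum B ev"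
      unfolding spectral_sum_def using cpsd_eigenvalue_nonneg[OF H eB]
      by (intro sum.cong refl) simp
    finally show ?thesis
      using ceigenbasis_eq_spectral_sum[OF eB] by simp
  qed
  \<comment> \<open>\<open>N\<close> is real: its conjugate is another psd square root of the real matrix \<open>cmat S\<close>\<close>
  have "cconj N ** cconj N = cmat S"
    by (simp add: cconj_mult[symmetric] NN cconj_cmat)
  hence "cconj N = N"
    using cpsd_sqrt_unique[OF cpsd_cconj[OF N] N] NN by simp
  hence N_real: "N = cmat (Re_mat N)"
    by (rule cconj_fixed_imp_real)
  show ?thesis
  proof (intro exI conjI)
    show "rpsd (Re_mat N)"
      using N N_real by (metis cpsd_cmat_iff)
    show "Re_mat N ** Re_mat N = S"
      using NN N_real by (metis cmat_inject cmat_mult)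
  qed
qed

lemma rpsd_msqrt:
  assumes "rpsd S"
  shows "rpsd (msqrt S)" "msqrt S ** msqrt S = S"
proof -
  have "\<exists>!T. rpsd T \<and> T ** T = S"
    using rpsd_sqrt_exists[OF assms] rpsd_sqrt_unique by blast
  hence "rpsd (msqrt S) \<and> msqrt S ** msqrt S = S"
    unfolding msqrt_def by (rule theI')
  thus "rpsd (msqrt S)" "msqrt S ** msqrt S = S"
    by auto
qed

lemma rpsd_gram: "rpsd (transpose X ** (X::real^'d^'d))"
  unfolding rpsd_def
proof (intro conjI allI)
  show "transpose (transpose X ** X) = transpose X ** X"
    by (simp add: matrix_transpose_mul)
  fix x
  have "x \<bullet> ((transpose X ** X) *v x) = ((X *v x) v* X) \<bullet> x"
    by (simp add: matrix_vector_mul_assoc[symmetric] inner_commute)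
  also have "\<dots> = (X *v x) \<bullet> (X *v x)"
    by (rule dot_lmul_matrix)
  finally have "x \<bullet> ((transpose X ** X) *v x) = (X *v x) \<bullet> (X *v x)" .
  thus "0 \<le> x \<bullet> ((transpose X ** X) *v x)"
    by simp
qed

lemma hermitian_csmul_i_cmat: "transpose A = - A \<Longrightarrow> hermitian (csmul \<i> (cmat A))"
  unfolding hermitian_def cadj_csmul cadj_cmat by (simp add: cmat_def csmul_def vec_eq_iff)

lemma mabs_eq_spectral_sum:
  assumes A: "transpose A = - A" and eB: "ceigenbasis (csmul \<i> (cmat A)) B \<mu>"
  shows "cmat (mabs A) = spectral_sum B (\<lambda>b. \<bar>\<mu> b\<bar>)"
proof (rule cpsd_sqrt_unique)
  have B: "finite B" "corthonormal B"
    using eB unfolding ceigenbasis_on_def by auto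
  show "cpsd (cmat (mabs A))"
    unfolding mabs_def cpsd_cmat_iff by (intro rpsd_msqrt rpsd_gram)
  show "cpsd (spectral_sum B (\<lambda>b. \<bar>\<mu> b\<bar>))"
    by (rule cpsd_spectral_sum) simp
  have "cmat (mabs A) ** cmat (mabs A) = cmat (transpose A ** A)"
    unfolding mabs_def cmat_mult[symmetric] by (simp only: rpsd_msqrt(2)[OF rpsd_gram[of A]])
  also have "\<dots> = csmul \<i> (cmat A) ** csmul \<i> (cmat A)"
    by (simp add: csmul_mult cmat_mult[symmetric] A matrix_neg_mult csmul_minus_one cmat_uminus)
  also have "\<dots> = spectral_sum B (\<lambda>b. \<bar>\<mu> b\<bar> * \<bar>\<mu> b\<bar>)"
    using spectral_sum_mult[OF B, of \<mu> \<mu>] ceigenbasis_eq_spectral_sum[OF eB] by simp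
  also have "\<dots> = spectral_sum B (\<lambda>b. \<bar>\<mu> b\<bar>) ** spectral_sum B (\<lambda>b. \<bar>\<mu> b\<bar>)"
    by (rule spectral_sum_mult[OF B, symmetric])
  finally show "cmat (mabs A) ** cmat (mabs A) =
      spectral_sum B (\<lambda>b. \<bar>\<mu> b\<bar>) ** spectral_sum B (\<lambda>b. \<bar>\<mu> b\<bar>)" .
qed

section \<open>Loewner order\<close>

definition loewner_le :: "complex^'n^'n \<Rightarrow> complex^'n^'n \<Rightarrow> bool" where
  "loewner_le A B \<longleftrightarrow> (\<forall>x. Re (cinner x (A *v x)) \<le> Re (cinner x (B *v x)))"

lemma loewner_le_trans: "loewner_le A B \<Longrightarrow> loewner_le B C \<Longrightarrow> loewner_le A C"
  unfolding loewner_le_def by (meson order_trans)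

lemma loewner_le_add_left: "loewner_le A B \<Longrightarrow> loewner_le (C + A) (C + B)"
  unfolding loewner_le_def by (simp add: matrix_vector_mult_add_rdistrib cinner_add_right)

lemma loewner_le_congruence:
  assumes "hermitian S" "loewner_le A B"
  shows "loewner_le (S ** A ** S) (S ** B ** S)"
  unfolding loewner_le_def
proof
  fix x
  have "cinner x ((S ** M ** S) *v x) = cinner (S *v x) (M *v (S *v x))" for M
    by (simp add: matrix_vector_mul_assoc[symmetric] hermitian_cinner_swap[OF assms(1)])
  thus "Re (cinner x ((S ** A ** S) *v x)) \<le> Re (cinner x ((S ** B ** S) *v x))"
    using assms(2) unfolding loewner_le_def by simp
qed

lemma loewner_le_mabs:
  assumes A: "transpose A = - A" and \<beta>: "0 \<le> \<beta>" "\<beta> \<le> 1"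
  shows "loewner_le (\<beta> *\<^sub>R csmul \<i> (cmat A)) (cmat (mabs A))"
  unfolding loewner_le_def
proof
  fix x
  obtain B \<mu> where eB: "ceigenbasis (csmul \<i> (cmat A)) B \<mu>"
    using hermitian_ceigenbasis[OF hermitian_csmul_i_cmat[OF A]] by blast
  have "\<beta> * \<mu> b \<le> \<bar>\<mu> b\<bar>" for b
    using \<beta> by (smt (verit) abs_ge_self abs_ge_zero mult_left_le_one_le mult_nonneg_nonpos)
  hence "(\<Sum>b\<in>B. \<beta> * (\<mu> b * (cmod (cinner b x))\<^sup>2)) \<le> (\<Sum>b\<in>B. \<bar>\<mu> b\<bar> * (cmod (cinner b x))\<^sup>2)"
    by (intro sum_mono) (simp add: mult.assoc[symmetric] mult_right_mono)
  thus "Re (cinner x ((\<beta> *\<^sub>R csmul \<i> (cmat A)) *v x)) \<le> Re (cinner x (cmat (mabs A) *v x))"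
    unfolding mabs_eq_spectral_sum[OF A eB] ceigenbasis_eq_spectral_sum[OF eB]
    by (simp add: scaleR_matrix_vector_mult cinner_scaleR_right cinner_spectral_sum Re_sum
        sum_distrib_left)
qed

lemma trace_mabs_le:
  assumes A: "transpose A = - A" and R: "loewner_le (csmul \<i> (cmat A)) (cmat R)"
  shows "trace (mabs A) \<le> trace R"
proof -
  obtain B \<mu> where eB: "ceigenbasis (csmul \<i> (cmat A)) B \<mu>"
    using hermitian_ceigenbasis[OF hermitian_csmul_i_cmat[OF A]] by blast
  define r where "r b = Re (cinner b (cmat R *v b))" for b
  have "\<bar>\<mu> b\<bar> \<le> r b" if b: "b \<in> B" for b
  proof -
    have \<mu>: "cinner b (csmul \<i> (cmat A) *v b) = of_real (\<mu> b)"
      by (rule ceigenbasis_cinner_eigen[OF eB b])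
    have "\<mu> b \<le> r b"
      using R \<mu> unfolding loewner_le_def r_def by (metis Re_complex_of_real)
    moreover have "- \<mu> b \<le> r b"
    proof -
      \<comment> \<open>entrywise conjugation turns \<open>iA\<close> into \<open>-iA\<close> and fixes \<open>cmat R\<close>\<close>
      have conj: "cinner (vconj b) (M *v vconj b) = cnj (cinner b (cconj M *v b))" for M
        by (simp add: cinner_cconj)
      have neg: "cinner b ((- M) *v b) = - cinner b (M *v b)" for M
        by (simp add: cinner_def matrix_vector_mult_def sum_negf)
      have iA: "cconj (csmul \<i> (cmat A)) = - csmul \<i> (cmat A)"
        by (simp add: cconj_def csmul_def cmat_def vec_eq_iff)
      have "Re (cinner (vconj b) (csmul \<i> (cmat A) *v vconj b))
          \<le> Re (cinner (vconj b) (cmat R *v vconj b))"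
        using R unfolding loewner_le_def by blast
      thus ?thesis
        unfolding conj cconj_cmat iA neg \<mu> r_def by simp
    qed
    ultimately show ?thesis
      by linarith
  qed
  hence "(\<Sum>b\<in>B. \<bar>\<mu> b\<bar>) \<le> (\<Sum>b\<in>B. r b)"
    by (rule sum_mono)
  moreover have "trace (mabs A) = (\<Sum>b\<in>B. \<bar>\<mu> b\<bar>)"
    using arg_cong[OF mabs_eq_spectral_sum[OF A eB], of "\<lambda>M. Re (trace M)"]
    by (simp add: trace_cmat trace_spectral_sum[OF eB])
  moreover have "trace R = (\<Sum>b\<in>B. r b)"
    using arg_cong[OF ceigenbasis_trace[OF eB, of "cmat R"], of Re]
    by (simp add: trace_cmat r_def Re_sum)
  ultimately show ?thesis
    by simp
qed

lemma trace_le_of_loewner_le: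
  assumes Q: "hermitian Q" and QV: "loewner_le Q (cmat V)"
  shows "Re (trace Q) + trace (mabs (Im_mat Q)) \<le> trace V"
proof -
  have "loewner_le (- cmat (Re_mat Q) + Q) (- cmat (Re_mat Q) + cmat V)"
    using QV by (rule loewner_le_add_left)
  moreover have "- cmat (Re_mat Q) + Q = csmul \<i> (cmat (Im_mat Q))"
    by (subst (2) cmat_Re_Im) simp
  moreover have "- cmat (Re_mat Q) + cmat V = cmat (V - Re_mat Q)"
    by (simp add: cmat_diff)
  ultimately have "trace (mabs (Im_mat Q)) \<le> trace (V - Re_mat Q)"
    using trace_mabs_le[OF hermitian_Im_mat_antisym[OF Q]] by simp
  thus ?thesis
    by (simp add: trace_sub Re_trace_eq_trace_Re_mat)
qed

definition holevo_objective :: "real^'d^'d \<Rightarrow> complex^'d^'d \<Rightarrow> real" where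
  "holevo_objective G Z =
     Re (trace (cmat G ** Z)) + trace (mabs (msqrt G ** Im_mat Z ** msqrt G))"

lemma holevo_objective_mono:
  fixes G :: "real^'d^'d" and W Z :: "complex^'d^'d"
  assumes G: "rpsd G" and W: "hermitian W" and Z: "hermitian Z" and \<beta>: "0 \<le> \<beta>" "\<beta> \<le> 1"
    and WZ: "loewner_le W (cmat (Re_mat Z) + \<beta> *\<^sub>R csmul \<i> (cmat (Im_mat Z)))"
  shows "holevo_objective G W \<le> holevo_objective G Z"
proof -
  define g where "g = msqrt G"
  have gg: "g ** g = G" and "rpsd g"
    unfolding g_def using rpsd_msqrt[OF G] by auto
  hence g: "hermitian (cmat g)"
    by (simp add: hermitian_cmat rpsd_def)
  define A where "A = g ** Im_mat Z ** g"
  have A: "transpose A = - A"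
    using \<open>rpsd g\<close> hermitian_Im_mat_antisym[OF Z] unfolding A_def rpsd_def
    by (simp add: matrix_transpose_mul matrix_neg_mult matrix_mult_neg matrix_mul_assoc)
  define Q where "Q = cmat g ** W ** cmat g"
  have Q: "hermitian Q"
    using W g unfolding Q_def hermitian_def by (simp add: cadj_mult matrix_mul_assoc)
  have "loewner_le Q (cmat g ** (cmat (Re_mat Z) + \<beta> *\<^sub>R csmul \<i> (cmat (Im_mat Z))) ** cmat g)"
    unfolding Q_def using g WZ by (rule loewner_le_congruence)
  also have "cmat g ** (cmat (Re_mat Z) + \<beta> *\<^sub>R csmul \<i> (cmat (Im_mat Z))) ** cmat g
      = cmat (g ** Re_mat Z ** g) + \<beta> *\<^sub>R csmul \<i> (cmat A)"
    unfolding A_def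
    by (simp add: matrix_add_ldistrib matrix_add_rdistrib cmat_mult scalar_matrix_assoc[symmetric]
        matrix_scalar_ac csmul_matrix_mult matrix_mult_csmul csmul_scaleR)
  finally have "loewner_le Q (cmat (g ** Re_mat Z ** g) + cmat (mabs A))"
    using loewner_le_add_left[OF loewner_le_mabs[OF A \<beta>]] loewner_le_trans by blast
  hence "Re (trace Q) + trace (mabs (Im_mat Q)) \<le> trace (g ** Re_mat Z ** g + mabs A)"
    using trace_le_of_loewner_le[OF Q] by (simp add: cmat_add)
  moreover have "Re (trace Q) = Re (trace (cmat G ** W))"
    unfolding Q_def trace_sandwich[OF arg_cong[OF gg, of cmat, unfolded cmat_mult]] ..
  moreover have "Im_mat Q = g ** Im_mat W ** g"
    unfolding Q_def by (rule Im_mat_sandwich)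
  moreover have "trace (g ** Re_mat Z ** g) = Re (trace (cmat G ** Z))"
    by (simp add: trace_sandwich[OF gg] Re_trace_eq_trace_Re_mat Re_mat_cmat_mult)
  ultimately show ?thesis
    unfolding holevo_objective_def g_def[symmetric] A_def by (simp add: trace_add)
qed

section \<open>Weighted inner products and logarithmic derivatives\<close>

lemma trace_cadj_mult_self_columns:
  "trace (cadj X ** rho ** X) = (\<Sum>k\<in>UNIV. cinner (column k X) (rho *v column k X))"
  unfolding trace_def
proof (intro sum.cong refl)
  fix k
  have "(cadj X ** rho ** X) $ k $ k = (\<Sum>j\<in>UNIV. \<Sum>i\<in>UNIV. cnj (X$i$k) * rho$i$j * X$j$k)"
    by (simp add: matrix_matrix_mult_def cadj_def sum_distrib_right)
  also have "\<dots> = (\<Sum>i\<in>UNIV. \<Sum>j\<in>UNIV. cnj (X$i$k) * rho$i$j * X$j$k)"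
    by (rule sum.swap)
  finally show "(cadj X ** rho ** X) $ k $ k = cinner (column k X) (rho *v column k X)"
    by (simp add: cinner_def column_def matrix_vector_mult_def sum_distrib_left mult.assoc)
qed

lemma cpd_trace_sandwich:
  assumes rho: "cpd rho"
  shows "0 \<le> Re (trace (cadj X ** rho ** X))"
    and "Re (trace (cadj X ** rho ** X)) = 0 \<Longrightarrow> X = 0"
proof -
  have nonneg: "0 \<le> Re (cinner v (rho *v v))" for v
    using rho unfolding cpd_def by (cases "v = 0") (auto intro: less_imp_le)
  show "0 \<le> Re (trace (cadj X ** rho ** X))"
    unfolding trace_cadj_mult_self_columns Re_sum by (intro sum_nonneg nonneg)
  assume "Re (trace (cadj X ** rho ** X)) = 0"
  hence "\<forall>k\<in>UNIV. Re (cinner (column k X) (rho *v column k X)) = 0"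
    unfolding trace_cadj_mult_self_columns Re_sum
    by (subst sum_nonneg_eq_0_iff[symmetric]) (auto intro: nonneg)
  hence "column k X = 0" for k
    using rho unfolding cpd_def by (metis UNIV_I less_irrefl)
  thus "X = 0"
    by (simp add: column_def vec_eq_iff)
qed

definition rho_inner ::
    "real \<Rightarrow> real \<Rightarrow> complex^'n^'n \<Rightarrow> complex^'n^'n \<Rightarrow> complex^'n^'n \<Rightarrow> complex" where
  "rho_inner a b rho X Y =
     of_real a * trace (rho ** Y ** cadj X) + of_real b * trace (rho ** cadj X ** Y)"

lemma rho_inner_commute:
  assumes "hermitian rho"
  shows "rho_inner a b rho Y X = cnj (rho_inner a b rho X Y)"
proof -
  have "cnj (trace (rho ** Y ** cadj X)) = trace (X ** cadj Y ** rho)"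
    using assms by (simp add: hermitian_def trace_cadj[symmetric] cadj_mult matrix_mul_assoc)
  also have "\<dots> = trace (rho ** X ** cadj Y)"
    by (rule trace_mult_cycle[symmetric])
  finally have 1: "cnj (trace (rho ** Y ** cadj X)) = trace (rho ** X ** cadj Y)" .
  have "cnj (trace (rho ** cadj X ** Y)) = trace (cadj Y ** X ** rho)"
    using assms by (simp add: hermitian_def trace_cadj[symmetric] cadj_mult matrix_mul_assoc)
  also have "\<dots> = trace (rho ** cadj Y ** X)"
    by (rule trace_mult_cycle[symmetric])
  finally show ?thesis
    using 1 unfolding rho_inner_def by simp
qed

lemma rho_inner_add_right: "rho_inner a b rho X (Y1 + Y2) = rho_inner a b rho X Y1 + rho_inner a b rho X Y2"
  unfolding rho_inner_def by (simp add: matrix_add_ldistrib matrix_add_rdistrib trace_add algebra_simps)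

lemma rho_inner_diff_right: "rho_inner a b rho X (Y1 - Y2) = rho_inner a b rho X Y1 - rho_inner a b rho X Y2"
  unfolding rho_inner_def by (simp add: matrix_diff_ldistrib matrix_diff_rdistrib trace_sub algebra_simps)

lemma rho_inner_csmul_right: "rho_inner a b rho X (csmul c Y) = c * rho_inner a b rho X Y"
  unfolding rho_inner_def by (simp add: csmul_matrix_mult matrix_mult_csmul trace_csmul algebra_simps)

lemma rho_inner_zero_right: "rho_inner a b rho X 0 = 0"
  by (simp add: rho_inner_def trace_zero)

lemma rho_inner_sum_right:
  "rho_inner a b rho X (\<Sum>k\<in>K. csmul (f k) (Y k)) = (\<Sum>k\<in>K. f k * rho_inner a b rho X (Y k))"
  by (induct K rule: infinite_finite_induct)
    (simp_all add: rho_inner_add_right rho_inner_csmul_right rho_inner_zero_right)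

lemma rho_inner_sum_left:
  assumes "hermitian rho"
  shows "rho_inner a b rho (\<Sum>k\<in>K. csmul (f k) (Y k)) Z = (\<Sum>k\<in>K. cnj (f k) * rho_inner a b rho (Y k) Z)"
  by (simp add: rho_inner_commute[OF assms, of _ _ _ Z] rho_inner_sum_right)

lemma rho_inner_diff_left:
  assumes "hermitian rho"
  shows "rho_inner a b rho (X1 - X2) Z = rho_inner a b rho X1 Z - rho_inner a b rho X2 Z"
  by (simp add: rho_inner_commute[OF assms, of _ _ _ Z] rho_inner_diff_right)

lemma rho_inner_self:
  "Re (rho_inner a b rho X X) =
     a * Re (trace (cadj X ** rho ** X)) + b * Re (trace (cadj (cadj X) ** rho ** cadj X))"
  unfolding rho_inner_def cadj_cadj
  using trace_mult_cycle[of rho X "cadj X"] trace_mult_cycle[of X "cadj X" rho]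
    trace_mult_cycle[of rho "cadj X" X] trace_mult_cycle[of "cadj X" X rho]
  by simp

lemma rho_inner_pos:
  assumes rho: "cpd rho" and ab: "0 \<le> a" "0 \<le> b" "a + b = 1"
  shows "0 \<le> Re (rho_inner a b rho X X)" "Re (rho_inner a b rho X X) = 0 \<Longrightarrow> X = 0"
proof -
  note t1 = cpd_trace_sandwich[OF rho, of X] and t2 = cpd_trace_sandwich[OF rho, of "cadj X"]
  show "0 \<le> Re (rho_inner a b rho X X)"
    unfolding rho_inner_self using t1(1) t2(1) ab by simp
  assume z: "Re (rho_inner a b rho X X) = 0"
  have "a * Re (trace (cadj X ** rho ** X)) = 0" "b * Re (trace (cadj (cadj X) ** rho ** cadj X)) = 0"
    using z t1(1) t2(1) ab unfolding rho_inner_self by (smt (verit) mult_nonneg_nonneg)+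
  moreover have "0 < a \<or> 0 < b"
    using ab by linarith
  ultimately show "X = 0"
    using t1(2) t2(2) by (metis cadj_zero cadj_cadj mult_eq_0_iff less_irrefl)
qed

definition rho_mult :: "real \<Rightarrow> real \<Rightarrow> complex^'n^'n \<Rightarrow> complex^'n^'n \<Rightarrow> complex^'n^'n" where
  "rho_mult a b rho L = a *\<^sub>R (rho ** L) + b *\<^sub>R (L ** rho)"

lemma rho_inner_rho_mult:
  "rho_inner a b rho X L = trace (rho_mult a b rho L ** cadj X)"
  unfolding rho_inner_def rho_mult_def
  by (simp add: matrix_add_rdistrib scalar_matrix_assoc[symmetric] trace_add trace_scaleR
      trace_mult_cycle[of L rho "cadj X"])

lemma linear_rho_mult: "linear (rho_mult a b rho)"
  by (rule linearI) (simp_all add: rho_mult_def matrix_add_ldistrib matrix_add_rdistrib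
      scalar_matrix_assoc[symmetric] matrix_scalar_ac scaleR_add_right algebra_simps)

lemma rho_mult_bij:
  assumes rho: "cpd rho" and ab: "0 \<le> a" "0 \<le> b" "a + b = 1"
  shows "inj (rho_mult a b rho)" "surj (rho_mult a b rho)"
proof -
  have "L = 0" if "rho_mult a b rho L = 0" for L
    using rho_inner_pos(2)[OF assms, of L] that
    by (simp add: rho_inner_rho_mult trace_zero)
  thus inj: "inj (rho_mult a b rho)"
    using linear_injective_0[OF linear_rho_mult] by blast
  show "surj (rho_mult a b rho)"
    by (rule linear_inj_imp_surj[OF linear_rho_mult inj])
qed

lemma Lbeta_eq:
  assumes rho: "cpd rho" and \<beta>: "0 \<le> \<beta>" "\<beta> \<le> 1"
  shows "D = rho_mult ((1 + \<beta>) / 2) ((1 - \<beta>) / 2) rho (Lbeta \<beta> rho D)"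
proof -
  let ?f = "rho_mult ((1 + \<beta>) / 2) ((1 - \<beta>) / 2) rho"
  have ab: "0 \<le> (1 + \<beta>) / 2" "0 \<le> (1 - \<beta>) / 2" "(1 + \<beta>) / 2 + (1 - \<beta>) / 2 = 1"
    using \<beta> by (auto simp: field_simps)
  have "\<exists>!L. D = ?f L"
    using rho_mult_bij[OF rho ab] by (metis injD surjD)
  hence "D = ?f (THE L. D = ?f L)"
    by (rule theI')
  thus ?thesis
    unfolding Lbeta_def rho_mult_def .
qed

lemma cadj_rho_mult: "hermitian rho \<Longrightarrow> cadj (rho_mult a b rho L) = rho_mult b a rho (cadj L)"
  unfolding rho_mult_def hermitian_def by (simp add: cadj_add cadj_scaleR cadj_mult add.commute)

lemma SLD_rho_mult:
  assumes rho: "cpd rho" and D: "hermitian D"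
  shows "hermitian (SLD rho D)" "D = rho_mult (1/2) (1/2) rho (SLD rho D)"
proof -
  let ?f = "rho_mult (1/2) (1/2) rho"
  have ab: "0 \<le> (1/2::real)" "(1/2::real) + 1/2 = 1"
    by auto
  note bij = rho_mult_bij[OF rho ab(1) ab(1) ab(2)]
  obtain L where L: "D = ?f L"
    using bij(2) by (metis surjD)
  have "?f (cadj L) = ?f L"
    using cadj_rho_mult[of rho "1/2" "1/2" L] rho D L unfolding cpd_def hermitian_def by simp
  hence "hermitian L"
    unfolding hermitian_def using bij(1) by (metis injD)
  hence "\<exists>!L. hermitian L \<and> D = ?f L"
    using L bij(1) by (metis injD)
  hence "hermitian (SLD rho D) \<and> D = ?f (SLD rho D)"
    unfolding SLD_def rho_mult_def scaleR_add_right[symmetric] by (rule theI')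
  thus "hermitian (SLD rho D)" "D = ?f (SLD rho D)"
    by auto
qed

lemma hermitian_derivative:
  fixes rho :: "real^'d \<Rightarrow> complex^'n^'n"
  assumes "open \<Theta>" "\<theta>0 \<in> \<Theta>" "\<forall>\<theta>\<in>\<Theta>. hermitian (rho \<theta>)"
    and "(rho has_derivative Drho) (at \<theta>0)"
  shows "hermitian (Drho h)"
proof -
  have "bounded_linear (cadj :: complex^'n^'n \<Rightarrow> _)"
    by (simp add: linear_conv_bounded_linear[symmetric] linearI cadj_add cadj_scaleR)
  hence "((\<lambda>x. cadj (rho x)) has_derivative (\<lambda>x. cadj (Drho x))) (at \<theta>0)"
    using assms(4) by (rule bounded_linear.has_derivative)
  hence "(rho has_derivative (\<lambda>x. cadj (Drho x))) (at \<theta>0)"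
    using has_derivative_transform_within_open[OF _ assms(1,2)] assms(3)
    unfolding hermitian_def by fastforce
  hence "(\<lambda>x. cadj (Drho x)) = Drho"
    using assms(4) has_derivative_unique by blast
  thus ?thesis
    unfolding hermitian_def by metis
qed

section \<open>Cramer-Rao type bound\<close>

definition lincomb :: "complex^'d \<Rightarrow> ('d \<Rightarrow> complex^'n^'n) \<Rightarrow> complex^'n^'n" where
  "lincomb x Y = (\<Sum>k\<in>UNIV. csmul (x$k) (Y k))"

definition rho_gram :: "real \<Rightarrow> real \<Rightarrow> complex^'n^'n \<Rightarrow> ('d \<Rightarrow> complex^'n^'n) \<Rightarrow>
    ('d \<Rightarrow> complex^'n^'n) \<Rightarrow> complex^'d^'d" where
  "rho_gram a b rho X Y = (\<chi> i j. rho_inner a b rho (X i) (Y j))"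

lemma rho_inner_lincomb:
  assumes "hermitian rho"
  shows "rho_inner a b rho (lincomb x X) (lincomb y Y) = cinner x (rho_gram a b rho X Y *v y)"
  unfolding lincomb_def rho_gram_def rho_inner_sum_left[OF assms] rho_inner_sum_right
    cinner_def matrix_vector_mult_def
  by (simp add: sum_distrib_left mult.commute mult.left_commute) (rule sum.swap)

lemma hermitian_rho_gram:
  assumes "hermitian rho"
  shows "hermitian (rho_gram a b rho X X)"
proof -
  have "cnj (rho_inner a b rho (X j) (X i)) = rho_inner a b rho (X i) (X j)" for i j
    using rho_inner_commute[OF assms, of a b "X i" "X j"] by simp
  thus ?thesis
    by (simp add: hermitian_def cadj_def rho_gram_def vec_eq_iff)
qed

lemma matrix_inv_hermitian:
  assumes J: "hermitian J" "invertible J"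
  shows "J ** matrix_inv J = mat 1" "hermitian (matrix_inv J)"
proof -
  have JW: "J ** matrix_inv J = mat 1 \<and> matrix_inv J ** J = mat 1"
    using J(2) unfolding matrix_inv_def invertible_def by (rule someI_ex)
  thus "J ** matrix_inv J = mat 1"
    by blast
  have "cadj (matrix_inv J) = cadj (matrix_inv J) ** (J ** matrix_inv J)"
    using JW by simp
  also have "\<dots> = cadj (J ** matrix_inv J) ** matrix_inv J"
    using J(1) by (simp add: matrix_mul_assoc cadj_mult hermitian_def)
  finally show "hermitian (matrix_inv J)"
    using JW by (simp add: hermitian_def)
qed

lemma invertible_rho_gram:
  fixes L B :: "'d::finite \<Rightarrow> complex^'n^'n"
  assumes rho: "cpd rho" and ab: "0 \<le> a" "0 \<le> b" "a + b = 1"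
    and LB: "rho_gram a b rho L B = mat 1"
  shows "invertible (rho_gram a b rho L L)"
  unfolding invertible_left_inverse matrix_left_invertible_ker
proof (intro allI impI)
  fix x
  assume "rho_gram a b rho L L *v x = 0"
  have rh: "hermitian rho"
    using rho unfolding cpd_def by blast
  hence "rho_inner a b rho (lincomb x L) (lincomb x L) = 0"
    using \<open>rho_gram a b rho L L *v x = 0\<close> by (simp add: rho_inner_lincomb)
  hence L0: "lincomb x L = 0"
    using rho_inner_pos(2)[OF rho ab] by simp
  have LB_entry: "rho_inner a b rho (L k) (B m) = (if k = m then 1 else 0)" for k m
    using arg_cong[OF LB, of "\<lambda>M. M $ k $ m"] by (simp add: rho_gram_def mat_def)
  have "rho_inner a b rho (lincomb x L) (B m) = (\<Sum>k\<in>UNIV. if k = m then cnj (x$k) else 0)" for m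
    unfolding lincomb_def rho_inner_sum_left[OF rh] by (intro sum.cong) (auto simp: LB_entry)
  hence "cnj (x$m) = rho_inner a b rho (lincomb x L) (B m)" for m
    by simp
  also have "rho_inner a b rho (lincomb x L) (B m) = 0" for m
    unfolding L0 rho_inner_commute[OF rh, of a b 0] by (simp add: rho_inner_zero_right)
  finally show "x = 0"
    by (simp add: vec_eq_iff)
qed

lemma loewner_le_rho_gram_inverse:
  assumes rho: "cpd rho" and ab: "0 \<le> a" "0 \<le> b" "a + b = 1"
    and BL: "rho_gram a b rho B L = mat 1" and LB: "rho_gram a b rho L B = mat 1"
    and JW: "rho_gram a b rho L L ** W = mat 1"
  shows "loewner_le W (rho_gram a b rho B B)"
  unfolding loewner_le_def
proof
  fix x
  have rh: "hermitian rho"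
    using rho unfolding cpd_def by blast
  define y where "y = W *v x"
  define X where "X = lincomb x B"
  define Y where "Y = lincomb y L"
  have "rho_gram a b rho L L *v y = x"
    unfolding y_def matrix_vector_mul_assoc JW by simp
  hence YY: "rho_inner a b rho Y Y = cinner y x"
    unfolding Y_def rho_inner_lincomb[OF rh] by simp
  have XY: "rho_inner a b rho X Y = cinner x y" and YX: "rho_inner a b rho Y X = cinner y x"
    unfolding X_def Y_def rho_inner_lincomb[OF rh] BL LB by simp_all
  have "rho_inner a b rho (X - Y) (X - Y) = rho_inner a b rho X X - cinner x y"
    unfolding rho_inner_diff_left[OF rh] rho_inner_diff_right XY YX YY by simp
  hence "Re (cinner x y) \<le> Re (rho_inner a b rho X X)"
    using rho_inner_pos(1)[OF rho ab, of "X - Y"] by simp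
  thus "Re (cinner x (W *v x)) \<le> Re (cinner x (rho_gram a b rho B B *v x))"
    unfolding y_def X_def rho_inner_lincomb[OF rh] .
qed

lemma hermitian_Zmat:
  assumes rho: "hermitian rho" and B: "\<forall>j. hermitian (B j)"
  shows "hermitian (Zmat rho B)"
proof -
  have "cnj (Zmat rho B $ j $ i) = Zmat rho B $ i $ j" for i j
  proof -
    have "cnj (Zmat rho B $ j $ i) = trace (B j ** B i ** rho)"
      using rho B by (simp add: Zmat_def trace_cadj[symmetric] cadj_mult matrix_mul_assoc hermitian_def)
    also have "\<dots> = Zmat rho B $ i $ j"
      by (simp add: Zmat_def trace_mult_cycle[of rho])
    finally show ?thesis .
  qed
  thus ?thesis
    unfolding hermitian_def cadj_def by (simp add: vec_eq_iff)
qed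

lemma rho_gram_Zmat:
  assumes rho: "hermitian rho" and B: "\<forall>j. hermitian (B j)"
  shows "rho_gram ((1 + \<beta>) / 2) ((1 - \<beta>) / 2) rho B B =
    cmat (Re_mat (Zmat rho B)) + \<beta> *\<^sub>R csmul \<i> (cmat (Im_mat (Zmat rho B)))"
proof -
  have "rho_inner ((1 + \<beta>) / 2) ((1 - \<beta>) / 2) rho (B i) (B j) =
      of_real ((1 + \<beta>) / 2) * Zmat rho B $ i $ j + of_real ((1 - \<beta>) / 2) * cnj (Zmat rho B $ i $ j)"
    for i j
  proof -
    have "cnj (Zmat rho B $ i $ j) = Zmat rho B $ j $ i"
      using hermitian_Zmat[OF rho B] unfolding hermitian_def cadj_def by (metis vec_lambda_beta)
    thus ?thesis
      using B by (simp add: rho_inner_def Zmat_def hermitian_def matrix_mul_assoc)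
  qed
  thus ?thesis
    by (simp add: rho_gram_def cmat_def Re_mat_def Im_mat_def csmul_def vec_eq_iff complex_eq_iff
        field_simps)
qed

lemma rho_gram_Lbeta:
  fixes D :: "'d::finite \<Rightarrow> complex^'n^'n"
  assumes rho: "cpd rho" and \<beta>: "0 \<le> \<beta>" "\<beta> \<le> 1" and D: "\<forall>i. hermitian (D i)"
  defines "a \<equiv> (1 + \<beta>) / 2" and "b \<equiv> (1 - \<beta>) / 2" and "L \<equiv> \<lambda>i. Lbeta \<beta> rho (D i)"
  shows "rho_gram a b rho L L = Jbeta \<beta> rho D"
    and "locally_unbiased D B \<Longrightarrow> rho_gram a b rho B L = mat 1"
    and "locally_unbiased D B \<Longrightarrow> rho_gram a b rho L B = mat 1"
proof -
  have rh: "hermitian rho"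
    using rho unfolding cpd_def by blast
  have inner_L: "rho_inner a b rho X (L i) = trace (D i ** cadj X)" for X i
    unfolding rho_inner_rho_mult L_def a_def b_def Lbeta_eq[OF rho \<beta>, symmetric] ..
  have "rho_inner a b rho (L i) (L j) = trace (D i ** L j)" for i j
  proof -
    have "rho_inner a b rho (L i) (L j) = cnj (trace (D i ** cadj (L j)))"
      by (simp add: rho_inner_commute[OF rh, of _ _ "L i"] inner_L)
    also have "\<dots> = trace (cadj (D i ** cadj (L j)))"
      by (rule trace_cadj[symmetric])
    also have "cadj (D i ** cadj (L j)) = L j ** D i"
      using D by (simp add: cadj_mult hermitian_def)
    also have "trace (L j ** D i) = trace (D i ** L j)"
      by (rule trace_mul_sym)
    finally show ?thesis .
  qed
  thus "rho_gram a b rho L L = Jbeta \<beta> rho D"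
    by (simp add: rho_gram_def Jbeta_def L_def vec_eq_iff)
  assume B: "locally_unbiased D B"
  have BL: "rho_inner a b rho (B j) (L i) = (if i = j then 1 else 0)" for i j
    using B unfolding inner_L locally_unbiased_def hermitian_def by simp
  thus "rho_gram a b rho B L = mat 1"
    by (simp add: rho_gram_def mat_def vec_eq_iff)
  show "rho_gram a b rho L B = mat 1"
    by (simp add: rho_gram_def mat_def vec_eq_iff rho_inner_commute[OF rh, of _ _ "L _"] BL)
qed

theorem cramer_rao_beta:
  fixes D B :: "'d::finite \<Rightarrow> complex^'n^'n"
  assumes rho: "cpd rho" and \<beta>: "0 \<le> \<beta>" "\<beta> \<le> 1" and D: "\<forall>i. hermitian (D i)"
    and B: "locally_unbiased D B"
  shows "hermitian (matrix_inv (Jbeta \<beta> rho D))"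
    and "loewner_le (matrix_inv (Jbeta \<beta> rho D))
           (cmat (Re_mat (Zmat rho B)) + \<beta> *\<^sub>R csmul \<i> (cmat (Im_mat (Zmat rho B))))"
proof -
  let ?a = "(1 + \<beta>) / 2" and ?b = "(1 - \<beta>) / 2" and ?L = "\<lambda>i. Lbeta \<beta> rho (D i)"
  have ab: "0 \<le> ?a" "0 \<le> ?b" "?a + ?b = 1"
    using \<beta> by (auto simp: field_simps)
  have rh: "hermitian rho"
    using rho unfolding cpd_def by blast
  note gram = rho_gram_Lbeta[OF rho \<beta> D]
  have "hermitian (Jbeta \<beta> rho D)" "invertible (Jbeta \<beta> rho D)"
    using hermitian_rho_gram[OF rh, of ?a ?b ?L] invertible_rho_gram[OF rho ab gram(3)[OF B]]
    unfolding gram(1) by auto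
  note inv = matrix_inv_hermitian[OF this]
  show "hermitian (matrix_inv (Jbeta \<beta> rho D))"
    by (rule inv(2))
  have "\<forall>j. hermitian (B j)"
    using B unfolding locally_unbiased_def by blast
  thus "loewner_le (matrix_inv (Jbeta \<beta> rho D))
      (cmat (Re_mat (Zmat rho B)) + \<beta> *\<^sub>R csmul \<i> (cmat (Im_mat (Zmat rho B))))"
    using loewner_le_rho_gram_inverse[OF rho ab gram(2,3)[OF B], unfolded gram(1), OF inv(1)]
    by (simp add: rho_gram_Zmat[OF rh])
qed

lemma trace_mult_scaleR_sums:
  "trace ((\<Sum>i\<in>UNIV. c i *\<^sub>R X i) ** (\<Sum>j\<in>UNIV. d j *\<^sub>R Y j)) =
   (\<Sum>i\<in>UNIV. \<Sum>j\<in>UNIV. of_real (c i * d j) * trace (X i ** (Y j::complex^'n^'n)))"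
  by (simp add: matrix_mult_sum_left matrix_mult_sum_right trace_sum scalar_matrix_assoc[symmetric]
      matrix_scalar_ac trace_scaleR mult.assoc sum_distrib_left) (subst sum.swap, simp add: ac_simps)

lemma locally_unbiased_exists:
  fixes D :: "'d::finite \<Rightarrow> complex^'n^'n"
  assumes rho: "cpd rho" and D: "\<forall>i. hermitian (D i)"
    and indep: "\<forall>c::real^'d. (\<Sum>i\<in>UNIV. c$i *\<^sub>R SLD rho (D i)) = 0 \<longrightarrow> c = 0"
  shows "\<exists>B. locally_unbiased D B"
proof -
  define S where "S i = SLD rho (D i)" for i
  have S: "hermitian (S i)" "D i = rho_mult (1/2) (1/2) rho (S i)" for i
    unfolding S_def using SLD_rho_mult[OF rho] D by blast+
  define K :: "real^'d^'d" where "K = (\<chi> i j. Re (trace (D i ** S j)))"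
  have tK: "trace (D i ** S j) = of_real (K$i$j)" for i j
    unfolding K_def using hermitian_trace_mult_real[OF D[rule_format] S(1)] by simp
  have "c = 0" if Kc: "K *v c = 0" for c
  proof -
    define Sc where "Sc = (\<Sum>i\<in>UNIV. c$i *\<^sub>R S i)"
    have "hermitian Sc"
      using S(1) unfolding Sc_def hermitian_def by (simp add: cadj_sum cadj_scaleR)
    moreover have "(\<Sum>i\<in>UNIV. c$i *\<^sub>R D i) = rho_mult (1/2) (1/2) rho Sc"
      unfolding Sc_def S(2) linear_sum[OF linear_rho_mult] linear_cmul[OF linear_rho_mult] ..
    ultimately have "trace ((\<Sum>i\<in>UNIV. c$i *\<^sub>R D i) ** Sc) = rho_inner (1/2) (1/2) rho Sc Sc"
      by (simp add: rho_inner_rho_mult hermitian_def)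
    moreover have "Re (trace ((\<Sum>i\<in>UNIV. c$i *\<^sub>R D i) ** Sc)) = c \<bullet> (K *v c)"
      unfolding Sc_def trace_mult_scaleR_sums tK
      by (simp add: inner_vec_def matrix_vector_mult_def Re_sum sum_distrib_left algebra_simps)
    ultimately have "Sc = 0"
      using rho_inner_pos(2)[OF rho, of "1/2" "1/2" Sc] Kc by simp
    thus "c = 0"
      using indep unfolding Sc_def S_def by blast
  qed
  then obtain Kl where "Kl ** K = mat 1"
    using matrix_left_invertible_ker[of K] by blast
  hence KKl: "K ** Kl = mat 1"
    using matrix_left_right_inverse by blast
  define B where "B j = (\<Sum>k\<in>UNIV. (Kl$k$j) *\<^sub>R S k)" for j
  have "hermitian (B j)" for j
    using S(1) unfolding B_def hermitian_def by (simp add: cadj_sum cadj_scaleR)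
  moreover have "trace (D i ** B j) = (if i = j then 1 else 0)" for i j
  proof -
    have "trace (D i ** B j) = (\<Sum>k\<in>UNIV. of_real (K$i$k * Kl$k$j))"
      unfolding B_def
      by (simp add: matrix_mult_sum_right trace_sum matrix_scalar_ac scalar_matrix_assoc[symmetric]
          trace_scaleR tK mult.commute)
    also have "\<dots> = of_real ((K ** Kl)$i$j)"
      by (simp add: matrix_matrix_mult_def)
    finally show ?thesis
      unfolding KKl by (simp add: mat_def)
  qed
  ultimately show ?thesis
    unfolding locally_unbiased_def by blast
qed

lemma Cbeta_eq_holevo_objective:
  "Cbeta \<beta> rho D G = holevo_objective G (matrix_inv (Jbeta \<beta> rho D))"
  unfolding Cbeta_def Let_def holevo_objective_def ..

lemma Holevo_eq_INF_holevo_objective: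
  "Holevo rho D G = (INF B\<in>{B. locally_unbiased D B}. holevo_objective G (Zmat rho B))"
  unfolding Holevo_def holevo_objective_def ..

theorem lemma5:
  fixes rho :: "real^'d \<Rightarrow> complex^'n^'n"
    and \<Theta> :: "(real^'d) set"
    and \<theta>0 :: "real^'d"
    and Drho :: "real^'d \<Rightarrow> complex^'n^'n"
    and G :: "real^'d^'d"
    and \<beta> :: real
  assumes "open \<Theta>" and "\<theta>0 \<in> \<Theta>"
    and "\<forall>\<theta>\<in>\<Theta>. density (rho \<theta>)"
    and "rho differentiable_on \<Theta>"
    and "(rho has_derivative Drho) (at \<theta>0)"
    and "cpd (rho \<theta>0)"
    and "\<forall>c::real^'d. (\<Sum>i\<in>UNIV. c $ i *\<^sub>R SLD (rho \<theta>0) (pderiv_rho Drho i)) = 0 \<longrightarrow> c = 0"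
    and "has_invariant_extension (rho \<theta>0) (pderiv_rho Drho)"
    and "rpd G"
    and "0 \<le> \<beta>" and "\<beta> \<le> 1"
  shows "Holevo (rho \<theta>0) (pderiv_rho Drho) G \<ge> Cbeta \<beta> (rho \<theta>0) (pderiv_rho Drho) G"
proof -
  note rho = assms(6) and \<beta> = assms(10,11)
  have D: "\<forall>i. hermitian (pderiv_rho Drho i)"
    using hermitian_derivative[OF assms(1,2) _ assms(5)] assms(3)
    unfolding pderiv_rho_def density_def cpsd_def by blast
  have G: "rpsd G"
    using assms(9) unfolding rpd_def rpsd_def by (metis inner_zero_left order.refl order_less_imp_le)
  have "\<exists>B. locally_unbiased (pderiv_rho Drho) B"
    by (rule locally_unbiased_exists[OF rho D assms(7)])
  moreover have "holevo_objective G (matrix_inv (Jbeta \<beta> (rho \<theta>0) (pderiv_rho Drho)))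
      \<le> holevo_objective G (Zmat (rho \<theta>0) B)" if B: "locally_unbiased (pderiv_rho Drho) B" for B
  proof (rule holevo_objective_mono[OF G _ _ \<beta>])
    show "hermitian (Zmat (rho \<theta>0) B)"
      using rho B unfolding cpd_def locally_unbiased_def by (blast intro: hermitian_Zmat)
  qed (rule cramer_rao_beta[OF rho \<beta> D B])+
  ultimately show ?thesis
    unfolding Cbeta_eq_holevo_objective Holevo_eq_INF_holevo_objective
    by (intro cINF_greatest) auto
qed

end
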